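(* If a semigroup $\langle A;\cdot\rangle$ is an inflation of a subsemigroup which is a rectangular band of periodic commutative groups, and the product of any two idempotents of $A$ is an idempotent, then $\langle A;\cdot\rangle$ is a Hamiltonian algebra.
   Context: A semigroup $\langle T;\cdot\rangle$ is a rectangular band of semigroups $T_{i\lambda}$ if $\{T_{i\lambda}\mid i\in I,\lambda\in\Lambda\}$ is a partition of $T$ into subsemigroups with $T_{i\lambda}\cdot T_{j\mu}\subseteq T_{i\mu}$ for all $i,j\in I$, $\lambda,\mu\in\Lambda$; it is a rectangular band of periodic commutative groups if each $\langle T_{i\lambda};\cdot\rangle$ is a commutative group all of whose elements have finite order. A semigroup $\langle A;\cdot\rangle$ is an inflation of a subsemigroup $\langle B;\cdot\rangle$ if there is a partition $\{X_b\mid b\in B\}$ of $A$ with $b\in X_b$ and $x\cdot y=a\cdot b$ for all $a,b\in B$, $x\in X_a$, $y\in X_b$. An idempotent is $e$ with $ee=e$. Subalgebras of a semigroup are its nonempty subsets closed under $\cdot$; an algebra is called Hamiltonian if the universe of every subalgebra is an equivalence class (block) of some congruence of the algebra. *)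

theory Defs
  imports "HOL-Algebra.Group"
begin

text \<open>A semigroup is modelled as a HOL-Algebra structure G with 'sg G' (closed, associative);
  only the carrier and the multiplication are used (the 'one' field is ignored).\<close>

definition sg :: "('a, 'b) monoid_scheme \<Rightarrow> bool" where
  "sg G \<longleftrightarrow> (\<forall>x\<in>carrier G. \<forall>y\<in>carrier G. x \<otimes>\<^bsub>G\<^esub> y \<in> carrier G) \<and>
     (\<forall>x\<in>carrier G. \<forall>y\<in>carrier G. \<forall>z\<in>carrier G.
        (x \<otimes>\<^bsub>G\<^esub> y) \<otimes>\<^bsub>G\<^esub> z = x \<otimes>\<^bsub>G\<^esub> (y \<otimes>\<^bsub>G\<^esub> z))"

definition subalg :: "('a, 'b) monoid_scheme \<Rightarrow> 'a set \<Rightarrow> bool" where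
  "subalg G S \<longleftrightarrow> S \<noteq> {} \<and> S \<subseteq> carrier G \<and> (\<forall>x\<in>S. \<forall>y\<in>S. x \<otimes>\<^bsub>G\<^esub> y \<in> S)"

definition sg_congruence :: "('a, 'b) monoid_scheme \<Rightarrow> ('a \<times> 'a) set \<Rightarrow> bool" where
  "sg_congruence G R \<longleftrightarrow> equiv (carrier G) R \<and>
     (\<forall>a b c d. (a, b) \<in> R \<longrightarrow> (c, d) \<in> R \<longrightarrow> (a \<otimes>\<^bsub>G\<^esub> c, b \<otimes>\<^bsub>G\<^esub> d) \<in> R)"

definition hamiltonian :: "('a, 'b) monoid_scheme \<Rightarrow> bool" where
  "hamiltonian G \<longleftrightarrow> (\<forall>S. subalg G S \<longrightarrow> (\<exists>R. sg_congruence G R \<and> S \<in> carrier G // R))"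

definition idempotent :: "('a, 'b) monoid_scheme \<Rightarrow> 'a \<Rightarrow> bool" where
  "idempotent G e \<longleftrightarrow> e \<in> carrier G \<and> e \<otimes>\<^bsub>G\<^esub> e = e"

definition periodic_comm_group_on :: "('a, 'b) monoid_scheme \<Rightarrow> 'a set \<Rightarrow> bool" where
  "periodic_comm_group_on G T \<longleftrightarrow>
     (\<exists>e. comm_group \<lparr>carrier = T, mult = mult G, one = e\<rparr> \<and>
          (\<forall>x\<in>T. \<exists>n::nat. n > 0 \<and> x [^]\<^bsub>\<lparr>carrier = T, mult = mult G, one = e\<rparr>\<^esub> n = e))"

definition rect_band_pcg ::
  "('a, 'b) monoid_scheme \<Rightarrow> 'a set \<Rightarrow> 'i set \<Rightarrow> 'l set \<Rightarrow> ('i \<Rightarrow> 'l \<Rightarrow> 'a set) \<Rightarrow> bool" where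
  "rect_band_pcg G B I L T \<longleftrightarrow>
     (\<forall>i\<in>I. \<forall>l\<in>L. subalg G (T i l) \<and> periodic_comm_group_on G (T i l)) \<and>
     (\<Union>i\<in>I. \<Union>l\<in>L. T i l) = B \<and>
     (\<forall>i\<in>I. \<forall>j\<in>I. \<forall>l\<in>L. \<forall>m\<in>L. (i, l) \<noteq> (j, m) \<longrightarrow> T i l \<inter> T j m = {}) \<and>
     (\<forall>i\<in>I. \<forall>j\<in>I. \<forall>l\<in>L. \<forall>m\<in>L. \<forall>x\<in>T i l. \<forall>y\<in>T j m. x \<otimes>\<^bsub>G\<^esub> y \<in> T i m)"

definition inflation :: "('a, 'b) monoid_scheme \<Rightarrow> 'a set \<Rightarrow> ('a \<Rightarrow> 'a set) \<Rightarrow> bool" where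
  "inflation G B X \<longleftrightarrow>
     subalg G B \<and>
     (\<forall>b\<in>B. b \<in> X b) \<and>
     (\<Union>b\<in>B. X b) = carrier G \<and>
     (\<forall>a\<in>B. \<forall>b\<in>B. a \<noteq> b \<longrightarrow> X a \<inter> X b = {}) \<and>
     (\<forall>a\<in>B. \<forall>b\<in>B. \<forall>x\<in>X a. \<forall>y\<in>X b. x \<otimes>\<^bsub>G\<^esub> y = a \<otimes>\<^bsub>G\<^esub> b)"

end

theory Submission
  imports Defs "HOL-Algebra.Coset"
begin

text \<open>In an inflation x y only depends on the B-parts of x and y, so
  squares lie in B and Q = S \<inter> B is a nonempty subsemigroup of B; moreover S is closed under the
  retraction onto B: for an idempotent f \<in> Q and x \<in> X b, both b f = x f and f b = f x lie in Q,
  and b = (b f) e for an idempotent e \<in> Q. Since products of idempotents are idempotent, the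
  units e(i,\<lambda>) of the groups T(i,\<lambda>) multiply as a rectangular band, whence
  u e v = u v for all u, v \<in> B and every unit e. Fix a unit f \<in> Q, lying in the group T(i,\<lambda>).
  Then u \<mapsto> f u f is a homomorphism from B to T(i,\<lambda>), and Q is a class of the congruence on B
  that identifies all rows meeting Q, all columns meeting Q, and compares f u f modulo the subgroup
  Q \<inter> T(i,\<lambda>) (a subgroup by periodicity). This congruence lifts to A with S as a
  class and singleton classes outside S \<union> B.\<close>

lemma inflation_mult_mem:
  assumes "inflation G B X" "x \<in> carrier G" "y \<in> carrier G"
  shows "x \<otimes>\<^bsub>G\<^esub> y \<in> B"
proof -
  from assms obtain a b where "a \<in> B" "x \<in> X a" "b \<in> B" "y \<in> X b"
    unfolding inflation_def by (metis UN_iff)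
  with assms(1) show ?thesis unfolding inflation_def subalg_def by metis
qed

lemma inflation_subalg_inter_nonempty:
  assumes "inflation G B X" "subalg G S"
  shows "S \<inter> B \<noteq> {}"
proof -
  obtain s where "s \<in> S" "s \<in> carrier G" using assms(2) unfolding subalg_def by blast
  then have "s \<otimes>\<^bsub>G\<^esub> s \<in> S \<inter> B"
    using inflation_mult_mem[OF assms(1)] assms(2) unfolding subalg_def by blast
  then show ?thesis by blast
qed

lemma inflation_block_congruence:
  assumes infl: "inflation G B X" and S: "subalg G S"
    and R_equiv: "equiv B R"
    and R_compat: "\<And>a b c d. (a, b) \<in> R \<Longrightarrow> (c, d) \<in> R \<Longrightarrow> (a \<otimes>\<^bsub>G\<^esub> c, b \<otimes>\<^bsub>G\<^esub> d) \<in> R"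
    and block: "S \<inter> B \<in> B // R"
    and retract: "\<And>x b. x \<in> S \<Longrightarrow> b \<in> B \<Longrightarrow> x \<in> X b \<Longrightarrow> b \<in> S"
  shows "\<exists>\<theta>. sg_congruence G \<theta> \<and> S \<in> carrier G // \<theta>"
proof -
  define \<pi> where "\<pi> x = (SOME b. b \<in> B \<and> x \<in> X b)" for x
  have \<pi>: "\<pi> x \<in> B" "x \<in> X (\<pi> x)" if "x \<in> carrier G" for x
  proof -
    have "\<exists>b. b \<in> B \<and> x \<in> X b" using infl that unfolding inflation_def by blast
    then show "\<pi> x \<in> B" "x \<in> X (\<pi> x)" unfolding \<pi>_def by (metis (mono_tags) someI_ex)+
  qed
  have B_carrier: "B \<subseteq> carrier G" using infl unfolding inflation_def subalg_def by blast
  have \<pi>_B: "\<pi> b = b" if "b \<in> B" for b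
    using \<pi>[of b] that B_carrier infl unfolding inflation_def by blast
  have mult_\<pi>: "x \<otimes>\<^bsub>G\<^esub> y = \<pi> x \<otimes>\<^bsub>G\<^esub> \<pi> y" if "x \<in> carrier G" "y \<in> carrier G" for x y
    using \<pi> that infl unfolding inflation_def by blast
  define \<theta> where "\<theta> = {(x, y). x \<in> carrier G \<and> y \<in> carrier G \<and>
      (x = y \<or> x \<in> S \<union> B \<and> y \<in> S \<union> B \<and> (\<pi> x, \<pi> y) \<in> R)}"
  have S_carrier: "S \<subseteq> carrier G" using S unfolding subalg_def by blast
  have \<theta>_equiv: "equiv (carrier G) \<theta>"
    using R_equiv unfolding \<theta>_def equiv_def refl_on_def sym_def trans_def by blast
  have \<theta>_compat: "(a \<otimes>\<^bsub>G\<^esub> c, b \<otimes>\<^bsub>G\<^esub> d) \<in> \<theta>" if "(a, b) \<in> \<theta>" "(c, d) \<in> \<theta>" for a b c d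
  proof -
    have carrier: "a \<in> carrier G" "b \<in> carrier G" "c \<in> carrier G" "d \<in> carrier G"
      using that unfolding \<theta>_def by auto
    have "(\<pi> a, \<pi> b) \<in> R" "(\<pi> c, \<pi> d) \<in> R"
      using that \<pi> carrier R_equiv unfolding \<theta>_def equiv_def refl_on_def by auto
    then have "(a \<otimes>\<^bsub>G\<^esub> c, b \<otimes>\<^bsub>G\<^esub> d) \<in> R"
      using R_compat carrier mult_\<pi> by simp
    moreover have "a \<otimes>\<^bsub>G\<^esub> c \<in> B" "b \<otimes>\<^bsub>G\<^esub> d \<in> B"
      using inflation_mult_mem[OF infl] carrier by auto
    ultimately show ?thesis using B_carrier \<pi>_B unfolding \<theta>_def by auto
  qed
  obtain s where s: "s \<in> B" "S \<inter> B = R `` {s}" using block by (rule quotientE)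
  then have s_S: "s \<in> S" using R_equiv equiv_class_self by fastforce
  have "\<theta> `` {s} = S"
  proof (intro equalityI subsetI)
    fix y assume "y \<in> \<theta> `` {s}"
    then have "y = s \<or> y \<in> S \<union> B \<and> (s, \<pi> y) \<in> R" unfolding \<theta>_def using \<pi>_B s by auto
    then show "y \<in> S" using s s_S \<pi>_B by auto
  next
    fix y assume y: "y \<in> S"
    then have "\<pi> y \<in> S \<inter> B" using retract \<pi> S_carrier by blast
    then show "y \<in> \<theta> `` {s}" using y s s_S S_carrier \<pi>_B unfolding \<theta>_def by auto
  qed
  then have "S \<in> carrier G // \<theta>" using s_S S_carrier by (metis quotientI subsetD)
  moreover have "sg_congruence G \<theta>" unfolding sg_congruence_def using \<theta>_equiv \<theta>_compat by blast
  ultimately show ?thesis by blast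
qed

locale orthodox_rect_band_pcg =
  fixes G :: "('a, 'b) monoid_scheme" and B :: "'a set"
    and I :: "'i set" and L :: "'l set" and T :: "'i \<Rightarrow> 'l \<Rightarrow> 'a set"
  assumes sg: "sg G"
    and B_carrier: "B \<subseteq> carrier G"
    and rect_band: "rect_band_pcg G B I L T"
    and idempotent_mult:
      "\<And>e f. e \<in> B \<Longrightarrow> f \<in> B \<Longrightarrow> idempotent G e \<Longrightarrow> idempotent G f \<Longrightarrow> idempotent G (e \<otimes>\<^bsub>G\<^esub> f)"
begin

abbreviation mult_G (infixl "\<cdot>" 70) where "x \<cdot> y \<equiv> x \<otimes>\<^bsub>G\<^esub> y"

lemma assoc: "x \<in> B \<Longrightarrow> y \<in> B \<Longrightarrow> z \<in> B \<Longrightarrow> x \<cdot> y \<cdot> z = x \<cdot> (y \<cdot> z)"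
  using sg B_carrier unfolding sg_def by blast

lemma T_subset: "i \<in> I \<Longrightarrow> l \<in> L \<Longrightarrow> T i l \<subseteq> B"
  using rect_band unfolding rect_band_pcg_def by blast

lemma T_mult: "i \<in> I \<Longrightarrow> j \<in> I \<Longrightarrow> l \<in> L \<Longrightarrow> m \<in> L \<Longrightarrow> x \<in> T i l \<Longrightarrow> y \<in> T j m \<Longrightarrow> x \<cdot> y \<in> T i m"
  using rect_band unfolding rect_band_pcg_def by blast

lemma T_disjoint: "i \<in> I \<Longrightarrow> j \<in> I \<Longrightarrow> l \<in> L \<Longrightarrow> m \<in> L \<Longrightarrow> x \<in> T i l \<Longrightarrow> x \<in> T j m \<Longrightarrow> i = j \<and> l = m"
  using rect_band unfolding rect_band_pcg_def by blast

definition row :: "'a \<Rightarrow> 'i" where "row b = fst (SOME p. p \<in> I \<times> L \<and> b \<in> T (fst p) (snd p))"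
definition col :: "'a \<Rightarrow> 'l" where "col b = snd (SOME p. p \<in> I \<times> L \<and> b \<in> T (fst p) (snd p))"

lemma row_col: "b \<in> B \<Longrightarrow> row b \<in> I \<and> col b \<in> L \<and> b \<in> T (row b) (col b)"
proof -
  assume "b \<in> B"
  then have "\<exists>p. p \<in> I \<times> L \<and> b \<in> T (fst p) (snd p)"
    using rect_band unfolding rect_band_pcg_def by auto
  from someI_ex[OF this] show ?thesis unfolding row_def col_def by (simp add: mem_Times_iff)
qed

lemma row_col_eq: "b \<in> T i l \<Longrightarrow> i \<in> I \<Longrightarrow> l \<in> L \<Longrightarrow> row b = i \<and> col b = l"
proof -
  assume b: "b \<in> T i l" "i \<in> I" "l \<in> L"
  then have "b \<in> B" using T_subset by blast
  from row_col[OF this] b show ?thesis using T_disjoint by blast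
qed

lemma mult_mem: "u \<in> B \<Longrightarrow> c \<in> B \<Longrightarrow> u \<cdot> c \<in> B"
  using row_col T_mult T_subset by (meson subsetD)

lemma row_col_mult: "u \<in> B \<Longrightarrow> c \<in> B \<Longrightarrow> row (u \<cdot> c) = row u \<and> col (u \<cdot> c) = col c"
proof -
  assume "u \<in> B" "c \<in> B"
  with row_col have "u \<cdot> c \<in> T (row u) (col c)" "row u \<in> I" "col c \<in> L" using T_mult by blast+
  then show ?thesis using row_col_eq by blast
qed

definition group_at :: "'i \<Rightarrow> 'l \<Rightarrow> 'a \<Rightarrow> 'a monoid" where
  "group_at i l e = \<lparr>carrier = T i l, mult = mult G, one = e\<rparr>"

lemma group_at_simps [simp]:
  "carrier (group_at i l e) = T i l" "mult (group_at i l e) = mult G" "one (group_at i l e) = e"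
  by (simp_all add: group_at_def)

definition unit_at :: "'i \<Rightarrow> 'l \<Rightarrow> 'a" where
  "unit_at i l = (SOME e. comm_group (group_at i l e) \<and>
     (\<forall>x\<in>T i l. \<exists>n::nat. n > 0 \<and> x [^]\<^bsub>group_at i l e\<^esub> n = e))"

lemma group_at_periodic:
  assumes "i \<in> I" "l \<in> L"
  shows "comm_group (group_at i l (unit_at i l))"
    and "x \<in> T i l \<Longrightarrow> \<exists>n::nat. n > 0 \<and> x [^]\<^bsub>group_at i l (unit_at i l)\<^esub> n = unit_at i l"
proof -
  have "periodic_comm_group_on G (T i l)" using rect_band assms unfolding rect_band_pcg_def by simp
  then have "\<exists>e. comm_group (group_at i l e) \<and>
      (\<forall>x\<in>T i l. \<exists>n::nat. n > 0 \<and> x [^]\<^bsub>group_at i l e\<^esub> n = e)"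
    unfolding periodic_comm_group_on_def group_at_def by blast
  from someI_ex[OF this]
  show "comm_group (group_at i l (unit_at i l))"
    and "x \<in> T i l \<Longrightarrow> \<exists>n::nat. n > 0 \<and> x [^]\<^bsub>group_at i l (unit_at i l)\<^esub> n = unit_at i l"
    unfolding unit_at_def by blast+
qed

lemma unit_at_mem: "i \<in> I \<Longrightarrow> l \<in> L \<Longrightarrow> unit_at i l \<in> T i l"
  using monoid.one_closed[OF comm_monoid.axioms(1)[OF comm_group.axioms(1)[OF group_at_periodic(1)]]]
  by simp

lemma unit_at_left:
  assumes "i \<in> I" "l \<in> L" "x \<in> T i l" shows "unit_at i l \<cdot> x = x"
proof -
  interpret comm_group "group_at i l (unit_at i l)" using group_at_periodic(1) assms by blast
  show ?thesis using l_one[of x] assms by simp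
qed

lemma unit_at_right:
  assumes "i \<in> I" "l \<in> L" "x \<in> T i l" shows "x \<cdot> unit_at i l = x"
proof -
  interpret comm_group "group_at i l (unit_at i l)" using group_at_periodic(1) assms by blast
  show ?thesis using r_one[of x] assms by simp
qed

lemma idempotent_eq_unit_at:
  assumes "i \<in> I" "l \<in> L" "x \<in> T i l" "x \<cdot> x = x" shows "x = unit_at i l"
proof -
  interpret comm_group "group_at i l (unit_at i l)" using group_at_periodic(1) assms by blast
  show ?thesis using l_cancel_one[of x x] assms by simp
qed

abbreviation unit_of :: "'a \<Rightarrow> 'a" where "unit_of b \<equiv> unit_at (row b) (col b)"

lemma unit_at_B: "i \<in> I \<Longrightarrow> l \<in> L \<Longrightarrow> unit_at i l \<in> B"
  using unit_at_mem T_subset by blast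

lemma unit_at_mult:
  assumes "i \<in> I" "j \<in> I" "l \<in> L" "m \<in> L"
  shows "unit_at i l \<cdot> unit_at j m = unit_at i m"
proof -
  have "idempotent G (unit_at i l)" "idempotent G (unit_at j m)"
    unfolding idempotent_def using assms unit_at_B B_carrier unit_at_mem unit_at_left by auto
  then have "idempotent G (unit_at i l \<cdot> unit_at j m)"
    using idempotent_mult unit_at_B assms by blast
  moreover have "unit_at i l \<cdot> unit_at j m \<in> T i m" using T_mult unit_at_mem assms by blast
  ultimately show ?thesis using idempotent_eq_unit_at assms unfolding idempotent_def by blast
qed

lemma unit_of_mult: "b \<in> B \<Longrightarrow> unit_of b \<cdot> b = b" "b \<in> B \<Longrightarrow> b \<cdot> unit_of b = b"
  using row_col unit_at_left unit_at_right by blast+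

lemma mult_unit_at_col:
  assumes "b \<in> B" "i \<in> I" shows "b \<cdot> unit_at i (col b) = b"
proof -
  have "b \<cdot> unit_at i (col b) = b \<cdot> unit_of b \<cdot> unit_at i (col b)" using unit_of_mult assms by simp
  also have "\<dots> = b \<cdot> (unit_of b \<cdot> unit_at i (col b))" using assoc row_col unit_at_B assms by simp
  also have "\<dots> = b" using unit_at_mult row_col unit_of_mult assms by simp
  finally show ?thesis .
qed

lemma mult_unit_at_mult:
  assumes "u \<in> B" "c \<in> B" "j \<in> I" "m \<in> L"
  shows "u \<cdot> unit_at j m \<cdot> c = u \<cdot> c"
proof -
  note rc = row_col[OF assms(1)] row_col[OF assms(2)]
  have "u \<cdot> unit_at j m \<cdot> c = (u \<cdot> unit_of u) \<cdot> unit_at j m \<cdot> (unit_of c \<cdot> c)"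
    using unit_of_mult assms by simp
  also have "\<dots> = u \<cdot> (unit_of u \<cdot> unit_at j m \<cdot> unit_of c) \<cdot> c"
    using assms rc unit_at_B by (simp add: assoc mult_mem)
  also have "\<dots> = u \<cdot> (unit_of u \<cdot> unit_of c) \<cdot> c"
    using unit_at_mult rc assms by simp
  also have "\<dots> = (u \<cdot> unit_of u) \<cdot> (unit_of c \<cdot> c)"
    using assms rc unit_at_B by (simp add: assoc mult_mem)
  also have "\<dots> = u \<cdot> c"
    using unit_of_mult assms by simp
  finally show ?thesis .
qed

lemma unit_of_sandwich:
  assumes "w \<in> B" "j \<in> I" "m \<in> L"
  shows "unit_of w \<cdot> (unit_at j m \<cdot> w \<cdot> unit_at j m) \<cdot> unit_of w = w"
proof -
  note rc = row_col[OF assms(1)]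
  have "unit_of w \<cdot> (unit_at j m \<cdot> w \<cdot> unit_at j m) \<cdot> unit_of w
      = (unit_of w \<cdot> unit_at j m \<cdot> w) \<cdot> unit_at j m \<cdot> unit_of w"
    using assms rc unit_at_B by (simp add: assoc mult_mem)
  also have "\<dots> = w"
    using mult_unit_at_mult unit_at_B unit_of_mult assms rc by simp
  finally show ?thesis .
qed

lemma pow_Suc_mem_closed:
  assumes closed: "\<And>x y. x \<in> Q \<Longrightarrow> y \<in> Q \<Longrightarrow> x \<cdot> y \<in> Q"
    and "i \<in> I" "l \<in> L" "x \<in> Q" "x \<in> T i l"
  shows "x [^]\<^bsub>group_at i l (unit_at i l)\<^esub> Suc n \<in> Q"
proof (induction n)
  case 0
  then show ?case using unit_at_left assms by simp
next
  case (Suc n)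
  then show ?case using closed assms by (simp del: nat_pow_Suc add: nat_pow_Suc[of _ _ "Suc n"])
qed

lemma unit_at_mem_closed:
  assumes closed: "\<And>x y. x \<in> Q \<Longrightarrow> y \<in> Q \<Longrightarrow> x \<cdot> y \<in> Q"
    and "i \<in> I" "l \<in> L" "x \<in> Q" "x \<in> T i l"
  shows "unit_at i l \<in> Q"
proof -
  obtain n :: nat where "n > 0" "x [^]\<^bsub>group_at i l (unit_at i l)\<^esub> n = unit_at i l"
    using group_at_periodic(2) assms by blast
  then show ?thesis using pow_Suc_mem_closed[OF assms] by (metis gr0_conv_Suc)
qed

lemma inv_mem_closed:
  assumes closed: "\<And>x y. x \<in> Q \<Longrightarrow> y \<in> Q \<Longrightarrow> x \<cdot> y \<in> Q"
    and "i \<in> I" "l \<in> L" "x \<in> Q" "x \<in> T i l"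
  shows "inv\<^bsub>group_at i l (unit_at i l)\<^esub> x \<in> Q"
proof -
  interpret comm_group "group_at i l (unit_at i l)" using group_at_periodic(1) assms by blast
  obtain n where "x [^]\<^bsub>group_at i l (unit_at i l)\<^esub> Suc n = unit_at i l"
    using group_at_periodic(2) assms by (metis gr0_conv_Suc)
  then have "x [^]\<^bsub>group_at i l (unit_at i l)\<^esub> n \<otimes>\<^bsub>group_at i l (unit_at i l)\<^esub> x
      = \<one>\<^bsub>group_at i l (unit_at i l)\<^esub>"
    by simp
  then have "inv\<^bsub>group_at i l (unit_at i l)\<^esub> x = x [^]\<^bsub>group_at i l (unit_at i l)\<^esub> n"
    using inv_equality nat_pow_closed assms by simp
  moreover have "x [^]\<^bsub>group_at i l (unit_at i l)\<^esub> n \<in> Q"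
    using pow_Suc_mem_closed[OF assms] unit_at_mem_closed[OF assms] by (cases n) simp_all
  ultimately show ?thesis by simp
qed

lemma mem_if_idempotent_mults_mem:
  assumes closed: "\<And>x y. x \<in> Q \<Longrightarrow> y \<in> Q \<Longrightarrow> x \<cdot> y \<in> Q" and "Q \<subseteq> B"
    and f: "f \<in> Q" "f \<cdot> f = f" and b: "b \<in> B" "b \<cdot> f \<in> Q" "f \<cdot> b \<in> Q"
  shows "b \<in> Q"
proof -
  have fB: "f \<in> B" using f assms by blast
  note rc = row_col[OF fB] row_col[OF b(1)]
  have f_unit: "f = unit_of f" using idempotent_eq_unit_at rc f by blast
  have "f \<cdot> b \<in> T (row f) (col b)" using T_mult rc by blast
  then have unit_Q: "unit_at (row f) (col b) \<in> Q"
    using unit_at_mem_closed[OF closed] rc b by blast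
  have "b \<cdot> f \<cdot> unit_at (row f) (col b) = b \<cdot> unit_at (row f) (col b)"
    using mult_unit_at_mult[of b "unit_at (row f) (col b)" "row f" "col f"] f_unit unit_at_B rc b
    by simp
  also have "\<dots> = b" using mult_unit_at_col b rc by blast
  finally show ?thesis using closed b unit_Q by metis
qed

end

locale orthodox_rect_band_pcg_subsemigroup = orthodox_rect_band_pcg +
  fixes Q :: "'a set"
  assumes Q_subset: "Q \<subseteq> B" and Q_nonempty: "Q \<noteq> {}"
    and Q_closed: "\<And>x y. x \<in> Q \<Longrightarrow> y \<in> Q \<Longrightarrow> x \<cdot> y \<in> Q"
begin

definition q0 :: 'a where "q0 = (SOME q. q \<in> Q)"

abbreviation i0 where "i0 \<equiv> row q0"
abbreviation l0 where "l0 \<equiv> col q0"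
abbreviation e0 where "e0 \<equiv> unit_at i0 l0"
abbreviation H where "H \<equiv> group_at i0 l0 e0"

definition K :: "'a set" where "K = Q \<inter> T i0 l0"

definition sandwich :: "'a \<Rightarrow> 'a" where "sandwich u = e0 \<cdot> u \<cdot> e0"

text \<open>All rows meeting Q are identified (as None), and likewise all columns meeting Q.\<close>
definition signature where
  "signature u = (if row u \<in> row ` Q then None else Some (row u),
                  if col u \<in> col ` Q then None else Some (col u),
                  K #>\<^bsub>H\<^esub> sandwich u)"

lemma q0: "q0 \<in> Q" "i0 \<in> I" "l0 \<in> L" "q0 \<in> T i0 l0"
proof -
  show "q0 \<in> Q" unfolding q0_def using Q_nonempty some_in_eq by blast
  then show "i0 \<in> I" "l0 \<in> L" "q0 \<in> T i0 l0" using row_col Q_subset by auto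
qed

lemma e0_mem: "e0 \<in> Q" "e0 \<in> T i0 l0" "e0 \<in> B"
  using unit_at_mem_closed[where Q = Q, OF Q_closed] unit_at_mem unit_at_B q0 by auto

lemma H_comm_group: "comm_group H"
  using group_at_periodic(1) q0 by blast

lemma K_subgroup: "subgroup K H"
proof
  show "K \<subseteq> carrier H" unfolding K_def by auto
  show "x \<otimes>\<^bsub>H\<^esub> y \<in> K" if "x \<in> K" "y \<in> K" for x y
    using that Q_closed T_mult q0 unfolding K_def by auto
  show "\<one>\<^bsub>H\<^esub> \<in> K" unfolding K_def using e0_mem by auto
  show "inv\<^bsub>H\<^esub> x \<in> K" if "x \<in> K" for x
  proof -
    interpret comm_group H by (rule H_comm_group)
    have "inv\<^bsub>H\<^esub> x \<in> Q" using inv_mem_closed[where Q = Q, OF Q_closed] that q0 unfolding K_def by blast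
    moreover have "inv\<^bsub>H\<^esub> x \<in> T i0 l0" using inv_closed that unfolding K_def by simp
    ultimately show ?thesis unfolding K_def by blast
  qed
qed

lemma sandwich_mem: "u \<in> B \<Longrightarrow> sandwich u \<in> T i0 l0"
  unfolding sandwich_def using T_mult e0_mem row_col q0 by meson

lemma sandwich_mult:
  assumes "u \<in> B" "c \<in> B"
  shows "sandwich (u \<cdot> c) = sandwich u \<cdot> sandwich c"
proof -
  have "sandwich u \<cdot> sandwich c = (e0 \<cdot> u) \<cdot> e0 \<cdot> e0 \<cdot> c \<cdot> e0"
    unfolding sandwich_def using assms e0_mem by (simp add: assoc mult_mem)
  also have "\<dots> = (e0 \<cdot> u) \<cdot> e0 \<cdot> c \<cdot> e0"
    using unit_at_left e0_mem q0 assms by (simp add: assoc mult_mem)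
  also have "\<dots> = (e0 \<cdot> u) \<cdot> c \<cdot> e0"
    using mult_unit_at_mult e0_mem q0 assms mult_mem by simp
  also have "\<dots> = sandwich (u \<cdot> c)"
    unfolding sandwich_def using assms e0_mem by (simp add: assoc mult_mem)
  finally show ?thesis by simp
qed

lemma signature_mult:
  assumes "u \<in> B" "v \<in> B" "c \<in> B" "d \<in> B" "signature u = signature v" "signature c = signature d"
  shows "signature (u \<cdot> c) = signature (v \<cdot> d)"
proof -
  interpret normal K H using comm_group.subgroup_imp_normal[OF H_comm_group K_subgroup] .
  have coset_mult: "K #>\<^bsub>H\<^esub> sandwich (x \<cdot> y) = (K #>\<^bsub>H\<^esub> sandwich x) <#>\<^bsub>H\<^esub> (K #>\<^bsub>H\<^esub> sandwich y)"
    if "x \<in> B" "y \<in> B" for x y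
    using rcos_sum sandwich_mem sandwich_mult that by simp
  have "K #>\<^bsub>H\<^esub> sandwich (u \<cdot> c) = K #>\<^bsub>H\<^esub> sandwich (v \<cdot> d)"
    using assms coset_mult unfolding signature_def by simp
  moreover have "row (u \<cdot> c) = row u" "row (v \<cdot> d) = row v" "col (u \<cdot> c) = col c" "col (v \<cdot> d) = col d"
    using row_col_mult assms by auto
  ultimately show ?thesis using assms(5,6) unfolding signature_def by (simp split: if_splits)
qed

lemma signature_eq_iff:
  assumes w: "w \<in> B" shows "signature w = signature e0 \<longleftrightarrow> w \<in> Q"
proof -
  interpret comm_group H by (rule H_comm_group)
  have sandwich_e0: "K #>\<^bsub>H\<^esub> sandwich e0 = K"
    using subgroup.rcos_const[OF K_subgroup is_group] e0_mem unit_at_left q0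
    unfolding sandwich_def K_def by simp
  have signature_e0: "signature e0 = (None, None, K)"
    unfolding signature_def using sandwich_e0 e0_mem by auto
  show ?thesis
  proof
    assume "signature w = signature e0"
    then have "signature w = (None, None, K)" using signature_e0 by simp
    then have rc: "row w \<in> row ` Q" "col w \<in> col ` Q" and "K #>\<^bsub>H\<^esub> sandwich w = K"
      unfolding signature_def by (simp_all split: if_splits)
    then have sandwich_Q: "sandwich w \<in> Q"
      using rcos_self[of "sandwich w" K] K_subgroup sandwich_mem w unfolding K_def by auto
    obtain s t where st: "s \<in> Q" "t \<in> Q" "row s = row w" "col t = col w" using rc by auto
    then have "unit_of s \<in> Q" "unit_of t \<in> Q"
      using unit_at_mem_closed[where Q = Q, OF Q_closed] row_col Q_subset by (meson subsetD)+
    then have "unit_of s \<cdot> unit_of t \<in> Q" by (rule Q_closed)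
    then have "unit_of w \<in> Q" using unit_at_mult row_col Q_subset st by (metis subsetD)
    then show "w \<in> Q"
      using unit_of_sandwich[OF w q0(2,3)] Q_closed sandwich_Q unfolding sandwich_def by metis
  next
    assume "w \<in> Q"
    then have "sandwich w \<in> K"
      unfolding sandwich_def K_def using Q_closed e0_mem sandwich_mem w sandwich_def by auto
    then have "K #>\<^bsub>H\<^esub> sandwich w = K"
      using subgroup.rcos_const[OF K_subgroup is_group] by simp
    then show "signature w = signature e0"
      unfolding signature_e0 unfolding signature_def using \<open>w \<in> Q\<close> by auto
  qed
qed

lemma block_congruence:
  "\<exists>R. equiv B R \<and> (\<forall>a b c d. (a, b) \<in> R \<longrightarrow> (c, d) \<in> R \<longrightarrow> (a \<cdot> c, b \<cdot> d) \<in> R) \<and> Q \<in> B // R"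
proof (intro exI conjI allI impI)
  define R where "R = {(u, v). u \<in> B \<and> v \<in> B \<and> signature u = signature v}"
  show "equiv B R" unfolding R_def equiv_def refl_on_def sym_def trans_def by auto
  show "(a \<cdot> c, b \<cdot> d) \<in> R" if "(a, b) \<in> R" "(c, d) \<in> R" for a b c d
    using that signature_mult mult_mem unfolding R_def by auto
  have "R `` {e0} = {w \<in> B. signature w = signature e0}" unfolding R_def using e0_mem by auto
  also have "\<dots> = Q" using signature_eq_iff Q_subset by blast
  finally have "R `` {e0} = Q" .
  then show "Q \<in> B // R" using e0_mem by (metis quotientI)
qed

end

context orthodox_rect_band_pcg
begin

lemma subsemigroup_block_congruence:
  assumes "Q \<subseteq> B" "Q \<noteq> {}" "\<And>x y. x \<in> Q \<Longrightarrow> y \<in> Q \<Longrightarrow> x \<cdot> y \<in> Q"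
  shows "\<exists>R. equiv B R \<and> (\<forall>a b c d. (a, b) \<in> R \<longrightarrow> (c, d) \<in> R \<longrightarrow> (a \<cdot> c, b \<cdot> d) \<in> R) \<and> Q \<in> B // R"
proof -
  interpret orthodox_rect_band_pcg_subsemigroup G B I L T Q by unfold_locales (use assms in auto)
  show ?thesis by (rule block_congruence)
qed

lemma subalg_Int_closed:
  "subalg G S \<Longrightarrow> x \<in> S \<inter> B \<Longrightarrow> y \<in> S \<inter> B \<Longrightarrow> x \<cdot> y \<in> S \<inter> B"
  using mult_mem unfolding subalg_def by blast

lemma inflation_subalg_retract:
  assumes infl: "inflation G B X" and S: "subalg G S"
    and x: "x \<in> S" "b \<in> B" "x \<in> X b"
  shows "b \<in> S"
proof -
  note closed = subalg_Int_closed[OF S]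
  obtain q where q: "q \<in> S \<inter> B" using inflation_subalg_inter_nonempty[OF infl S] by blast
  note rc = row_col[of q]
  define f where "f = unit_of q"
  have f: "f \<in> S \<inter> B" "f \<cdot> f = f"
  proof -
    show "f \<in> S \<inter> B" unfolding f_def
      using unit_at_mem_closed[where Q = "S \<inter> B", OF closed] rc q by blast
    show "f \<cdot> f = f" unfolding f_def using unit_at_mem unit_at_left rc q by blast
  qed
  have "f \<in> X f" using infl f unfolding inflation_def by blast
  then have "x \<cdot> f = b \<cdot> f" "f \<cdot> x = f \<cdot> b"
    using infl x f unfolding inflation_def by blast+
  moreover have "x \<cdot> f \<in> S" "f \<cdot> x \<in> S" using S x f unfolding subalg_def by blast+
  ultimately have "b \<cdot> f \<in> S \<inter> B" "f \<cdot> b \<in> S \<inter> B"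
    using x f mult_mem by auto
  then show "b \<in> S"
    using mem_if_idempotent_mults_mem[where Q = "S \<inter> B", OF closed] f x by blast
qed

end

theorem mainTheorem18:
  fixes G :: "('a, 'b) monoid_scheme"
    and B :: "'a set" and X :: "'a \<Rightarrow> 'a set"
    and I :: "'i set" and L :: "'l set" and T :: "'i \<Rightarrow> 'l \<Rightarrow> 'a set"
  assumes "sg G"
    and "inflation G B X"
    and "rect_band_pcg G B I L T"
    and "\<forall>e f. idempotent G e \<longrightarrow> idempotent G f \<longrightarrow> idempotent G (e \<otimes>\<^bsub>G\<^esub> f)"
  shows "hamiltonian G"
  unfolding hamiltonian_def
proof (intro allI impI)
  fix S assume S: "subalg G S"
  interpret orthodox_rect_band_pcg G B I L T
  proof
    show "B \<subseteq> carrier G" using assms(2) unfolding inflation_def subalg_def by blast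
  qed (use assms in blast)+
  obtain R where R: "equiv B R" "\<forall>a b c d. (a, b) \<in> R \<longrightarrow> (c, d) \<in> R \<longrightarrow> (a \<cdot> c, b \<cdot> d) \<in> R"
      "S \<inter> B \<in> B // R"
    using subsemigroup_block_congruence[OF _ inflation_subalg_inter_nonempty[OF assms(2) S]
        subalg_Int_closed[OF S]]
    by blast
  show "\<exists>\<theta>. sg_congruence G \<theta> \<and> S \<in> carrier G // \<theta>"
    using inflation_block_congruence[OF assms(2) S R(1) _ R(3)] R(2) inflation_subalg_retract[OF assms(2) S]
    by blast
qed

end
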